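(* Let $a>0$, $n\ge2$, $\lambda=\frac{\pi-2}{a(\pi-4)}$, $s=\frac{\sqrt{2\pi}}{a(\pi-4)}$, $k=\frac{2a}{\sqrt{2\pi}}$, $t=\frac{2}{\sqrt{2\pi}a}$, and let $C=(c_{ij})$ be real with $\sum_i c_{ij}=1$ for all $j$. Suppose real numbers $\rho^i_\infty,q^i_\infty,\gamma^i$ satisfy for all $i$ \[ q^i_\infty-\gamma^i+k\rho^i_\infty=-\sum_jc_{ij}\big(q^j_\infty+\gamma^j-k\rho^j_\infty\big), \] \[ \rho^i_\infty+(\lambda+s)\gamma^i+t\,q^i_\infty=\sum_jc_{ij}\big(\rho^j_\infty+(s-\lambda)\gamma^j-t\,q^j_\infty\big). \] Then $\sum_iq^i_\infty=0$ and $\sum_i\gamma^i=0$. If moreover the node is uniform ($c_{ij}=\frac1{n-1}$ for $i\neq j$, $c_{ii}=0$), then with $m=\frac{n-2}{n}$ each of the quantities \[ m\,q^i_\infty-\gamma^i+k\rho^i_\infty,\qquad \rho^i_\infty+\Big(m+\tfrac{\sqrt{2\pi}}{\pi-2}\Big)\lambda\gamma^i+t\,m\,q^i_\infty,\qquad \rho^i_\infty+\frac{m}{a}\,\frac{4+m\sqrt{2\pi}}{\sqrt{2\pi}+2m}\,q^i_\infty \] is independent of $i$.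
   Context: These equations come from integrating the kinetic coupling $f^i(0,v)=\sum_jc_{ij}f^j(0,-v)$, $v>0$, against $1$ and $v$ over half-ranges and expressing the half-moments at the node through the asymptotic states and layer amplitudes $\gamma^i$ of the half-moment half-space problems (unbounded velocities, Maxwellian $M(v)=(2\pi a^2)^{-1/2}e^{-v^2/(2a^2)}$) on each edge. *)

theory Defs
  imports Complex_Main
begin

end

theory Submission
  imports Defs "HOL-Analysis.Complex_Transcendental"
begin

text \<open>Summing the coupling conditions over all edges and using that the columns of \<open>C\<close> sum to one
  gives two linear relations between the totals; the \<open>\<rho>\<close>-terms cancel and \<open>\<lambda> \<noteq> 0\<close> forces
  \<open>\<Sum> q = \<Sum> \<gamma> = 0\<close>. At a uniform node each coupling condition reads
  \<open>(n - 1) x\<^sub>i + y\<^sub>i = \<Sum>\<^sub>j y\<^sub>j\<close>, so the first two quantities equal \<open>k R / n\<close> and \<open>R / n\<close> with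
  \<open>R = \<Sum> \<rho>\<close>. The third quantity is the combination of these two that eliminates \<open>\<gamma>\<close>, and it
  equals \<open>R / n\<close> as well.\<close>

lemma sum_column_stochastic:
  fixes c :: "nat \<Rightarrow> nat \<Rightarrow> real"
  assumes "\<forall>j<n. (\<Sum>i<n. c i j) = 1"
  shows "(\<Sum>i<n. \<Sum>j<n. c i j * f j) = (\<Sum>j<n. f j)"
proof -
  have "(\<Sum>i<n. \<Sum>j<n. c i j * f j) = (\<Sum>j<n. (\<Sum>i<n. c i j) * f j)"
    by (subst sum.swap) (simp add: sum_distrib_right)
  also have "\<dots> = (\<Sum>j<n. f j)"
    using assms by simp
  finally show ?thesis .
qed

lemma column_stochastic_sum_conservation:
  fixes c :: "nat \<Rightarrow> nat \<Rightarrow> real"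
  assumes "\<forall>j<n. (\<Sum>i<n. c i j) = 1"
    and "\<forall>i<n. x i = (\<Sum>j<n. c i j * y j)"
  shows "(\<Sum>i<n. x i) = (\<Sum>j<n. y j)"
  using assms sum_column_stochastic[OF assms(1)] by simp

lemma uniform_coupling_sum:
  fixes c :: "nat \<Rightarrow> nat \<Rightarrow> real"
  assumes uniform: "\<forall>i<n. \<forall>j<n. c i j = (if i = j then 0 else 1 / (real n - 1))"
    and "n \<ge> 2" and "i < n"
  shows "(real n - 1) * (\<Sum>j<n. c i j * y j) = (\<Sum>j<n. y j) - y i"
proof -
  have "(\<Sum>j<n. c i j * y j) = (\<Sum>j\<in>{..<n} - {i}. y j / (real n - 1))"
    using assms by (simp add: sum.remove)
  also have "\<dots> = ((\<Sum>j<n. y j) - y i) / (real n - 1)"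
    using \<open>i < n\<close> by (simp add: sum_divide_distrib sum_diff1 diff_divide_distrib)
  finally show ?thesis
    using \<open>n \<ge> 2\<close> by simp
qed

lemma coupled_totals_vanish:
  fixes c :: "nat \<Rightarrow> nat \<Rightarrow> real" and rho q gam :: "nat \<Rightarrow> real" and lam s k t :: real
  assumes colsum: "\<forall>j<n. (\<Sum>i<n. c i j) = 1" and "lam \<noteq> 0"
    and eq1: "\<forall>i<n. q i - gam i + k * rho i
               = - (\<Sum>j<n. c i j * (q j + gam j - k * rho j))"
    and eq2: "\<forall>i<n. rho i + (lam + s) * gam i + t * q i
               = (\<Sum>j<n. c i j * (rho j + (s - lam) * gam j - t * q j))"
  shows "(\<Sum>i<n. q i) = 0 \<and> (\<Sum>i<n. gam i) = 0"
proof -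
  have "(\<Sum>i<n. q i - gam i + k * rho i) = (\<Sum>j<n. - (q j + gam j - k * rho j))"
    using eq1 by (intro column_stochastic_sum_conservation[OF colsum]) (simp only: mult_minus_right sum_negf)
  then have Q: "(\<Sum>i<n. q i) = 0"
    by (simp add: sum.distrib sum_subtractf sum_negf sum_distrib_left[symmetric])
  have "(\<Sum>i<n. rho i + (lam + s) * gam i + t * q i)
      = (\<Sum>j<n. rho j + (s - lam) * gam j - t * q j)"
    using eq2 by (intro column_stochastic_sum_conservation[OF colsum]) simp
  then have "lam * (\<Sum>i<n. gam i) = 0"
    using Q by (simp add: sum.distrib sum_subtractf sum_distrib_left[symmetric] algebra_simps)
  with Q \<open>lam \<noteq> 0\<close> show ?thesis by simp
qed

lemma uniform_node_values:
  fixes c :: "nat \<Rightarrow> nat \<Rightarrow> real" and rho q gam :: "nat \<Rightarrow> real" and lam s k t :: real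
  assumes uniform: "\<forall>i<n. \<forall>j<n. c i j = (if i = j then 0 else 1 / (real n - 1))"
    and n: "n \<ge> 2" and i: "i < n"
    and Q: "(\<Sum>i<n. q i) = 0" and G: "(\<Sum>i<n. gam i) = 0"
    and eq1: "q i - gam i + k * rho i = - (\<Sum>j<n. c i j * (q j + gam j - k * rho j))"
    and eq2: "rho i + (lam + s) * gam i + t * q i
               = (\<Sum>j<n. c i j * (rho j + (s - lam) * gam j - t * q j))"
  defines "m \<equiv> (real n - 2) / real n" and "R \<equiv> \<Sum>i<n. rho i"
  shows "m * q i - gam i + k * rho i = k * R / real n"
    and "rho i + (lam + s - 2 * lam / real n) * gam i + t * m * q i = R / real n"
proof -
  have sums: "(\<Sum>j<n. q j + gam j - k * rho j) = - k * R"
    "(\<Sum>j<n. rho j + (s - lam) * gam j - t * q j) = R"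
    using Q G by (simp_all add: R_def sum.distrib sum_subtractf sum_distrib_left[symmetric])
  have "(real n - 1) * (q i - gam i + k * rho i) = k * R + (q i + gam i - k * rho i)"
    using eq1 uniform_coupling_sum[OF uniform n i, of "\<lambda>j. q j + gam j - k * rho j"] sums(1)
    by simp
  then show "m * q i - gam i + k * rho i = k * R / real n"
    using n by (simp add: m_def field_simps)
  have "(real n - 1) * (rho i + (lam + s) * gam i + t * q i)
      = R - (rho i + (s - lam) * gam i - t * q i)"
    using eq2 uniform_coupling_sum[OF uniform n i, of "\<lambda>j. rho j + (s - lam) * gam j - t * q j"]
      sums(2)
    by simp
  then have "real n * rho i + (real n * lam + real n * s - 2 * lam) * gam i
      + (real n - 2) * t * q i = R"
    by (simp add: algebra_simps)
  moreover have "rho i + (lam + s - 2 * lam / real n) * gam i + t * m * q i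
      = (real n * rho i + (real n * lam + real n * s - 2 * lam) * gam i
         + (real n - 2) * t * q i) / real n"
    using n by (simp add: m_def field_simps)
  ultimately show "rho i + (lam + s - 2 * lam / real n) * gam i + t * m * q i = R / real n"
    by simp
qed

lemma eliminate_gamma:
  fixes r q g X Z k t m R :: real
  assumes Z: "(1 + X * k) * Z = m * (t + X)" and nz: "1 + X * k \<noteq> 0"
    and first: "m * q - g + k * r = k * R" and second: "r + X * g + t * m * q = R"
  shows "r + Z * q = R"
proof -
  have "(1 + X * k) * (r + Z * q) = (1 + X * k) * r + ((1 + X * k) * Z) * q"
    by (simp add: algebra_simps)
  also have "\<dots> = (r + X * g + t * m * q) + X * (m * q - g + k * r)"
    unfolding Z by (simp add: algebra_simps)
  also have "\<dots> = (1 + X * k) * R"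
    using first second by (simp add: algebra_simps)
  finally show ?thesis
    using nz by simp
qed

lemma half_space_coefficients:
  fixes a m lam k t :: real
  assumes a: "a > 0" and m: "m \<ge> 0"
    and lam: "lam = (pi - 2) / (a * (pi - 4))"
    and k: "k = 2 * a / sqrt (2 * pi)" and t: "t = 2 / (sqrt (2 * pi) * a)"
  defines "X \<equiv> (m + sqrt (2 * pi) / (pi - 2)) * lam"
  shows "1 + X * k \<noteq> 0"
    and "(1 + X * k) * (m / a * ((4 + m * sqrt (2 * pi)) / (sqrt (2 * pi) + 2 * m)))
       = m * (t + X)"
proof -
  define w where "w = sqrt (2 * pi)"
  have "pi - 2 \<noteq> 0" "pi - 4 \<noteq> 0"
    using pi_gt3 pi_less_4 by simp_all
  moreover have "w > 0" "w * w = 2 * pi"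
    by (simp_all add: w_def)
  moreover have "w + 2 * m \<noteq> 0"
    using \<open>w > 0\<close> m by simp
  have "m + w / (pi - 2) = (m * (pi - 2) + w) / (pi - 2)"
    using \<open>pi - 2 \<noteq> 0\<close> by (simp add: field_simps)
  then have X: "X = (m * (pi - 2) + w) / (a * (pi - 4))"
    unfolding X_def lam w_def[symmetric] using \<open>pi - 2 \<noteq> 0\<close> by simp
  ultimately have one_plus: "1 + X * k = (pi - 2) * (w + 2 * m) / ((pi - 4) * w)"
    and t_plus: "t + X = (pi - 2) * (4 + m * w) / (a * (pi - 4) * w)"
    using a unfolding X k t w_def[symmetric]
    by (simp_all add: field_simps)
  show "1 + X * k \<noteq> 0"
    unfolding one_plus using \<open>pi - 2 \<noteq> 0\<close> \<open>pi - 4 \<noteq> 0\<close> \<open>w > 0\<close> \<open>w + 2 * m \<noteq> 0\<close> by simp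
  show "(1 + X * k) * (m / a * ((4 + m * sqrt (2 * pi)) / (sqrt (2 * pi) + 2 * m)))
       = m * (t + X)"
    unfolding one_plus t_plus w_def[symmetric] using \<open>w + 2 * m \<noteq> 0\<close> by (simp add: ac_simps)
qed

lemma uniform_node_invariants:
  fixes a :: real and n :: nat and c :: "nat \<Rightarrow> nat \<Rightarrow> real"
    and rho q gam :: "nat \<Rightarrow> real" and lam s k t :: real
  assumes a_pos: "a > 0" and n_ge: "n \<ge> 2"
    and lam_def: "lam = (pi - 2) / (a * (pi - 4))"
    and s_def: "s = sqrt (2 * pi) / (a * (pi - 4))"
    and k_def: "k = 2 * a / sqrt (2 * pi)"
    and t_def: "t = 2 / (sqrt (2 * pi) * a)"
    and uniform: "\<forall>i<n. \<forall>j<n. c i j = (if i = j then 0 else 1 / (real n - 1))"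
    and Q: "(\<Sum>i<n. q i) = 0" and G: "(\<Sum>i<n. gam i) = 0"
    and eq1: "\<forall>i<n. q i - gam i + k * rho i
               = - (\<Sum>j<n. c i j * (q j + gam j - k * rho j))"
    and eq2: "\<forall>i<n. rho i + (lam + s) * gam i + t * q i
               = (\<Sum>j<n. c i j * (rho j + (s - lam) * gam j - t * q j))"
  defines "m \<equiv> (real n - 2) / real n" and "R \<equiv> \<Sum>i<n. rho i"
  assumes "i < n"
  shows "m * q i - gam i + k * rho i = k * (R / real n)"
    and "rho i + (m + sqrt (2 * pi) / (pi - 2)) * lam * gam i + t * m * q i = R / real n"
    and "rho i + m / a * ((4 + m * sqrt (2 * pi)) / (sqrt (2 * pi) + 2 * m)) * q i = R / real n"
proof -
  define X where "X = (m + sqrt (2 * pi) / (pi - 2)) * lam"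
  have "m \<ge> 0"
    using n_ge by (simp add: m_def)
  have "s = sqrt (2 * pi) / (pi - 2) * lam"
    using pi_gt3 by (simp add: lam_def s_def)
  moreover have "m * lam = lam - 2 * lam / real n"
    using n_ge by (simp add: m_def field_simps)
  ultimately have "X = lam + s - 2 * lam / real n"
    by (simp add: X_def algebra_simps)
  then show first: "m * q i - gam i + k * rho i = k * (R / real n)"
    and second: "rho i + X * gam i + t * m * q i = R / real n"
    using uniform_node_values[OF uniform n_ge \<open>i < n\<close> Q G
        eq1[rule_format, OF \<open>i < n\<close>] eq2[rule_format, OF \<open>i < n\<close>]]
    by (simp_all add: m_def R_def)
  note coefficients = half_space_coefficients[OF a_pos \<open>m \<ge> 0\<close> lam_def k_def t_def, folded X_def]
  show "rho i + m / a * ((4 + m * sqrt (2 * pi)) / (sqrt (2 * pi) + 2 * m)) * q i = R / real n"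
    using eliminate_gamma[OF coefficients(2,1) first second] .
qed

theorem mainTheorem10:
  fixes a :: real and n :: nat
    and c :: "nat \<Rightarrow> nat \<Rightarrow> real"
    and rho q gam :: "nat \<Rightarrow> real"
    and lam s k t :: real
  assumes a_pos: "a > 0" and n_ge: "n \<ge> 2"
    and lam_def: "lam = (pi - 2) / (a * (pi - 4))"
    and s_def: "s = sqrt (2 * pi) / (a * (pi - 4))"
    and k_def: "k = 2 * a / sqrt (2 * pi)"
    and t_def: "t = 2 / (sqrt (2 * pi) * a)"
    and colsum: "\<forall>j<n. (\<Sum>i<n. c i j) = 1"
    and eq1: "\<forall>i<n. q i - gam i + k * rho i
               = - (\<Sum>j<n. c i j * (q j + gam j - k * rho j))"
    and eq2: "\<forall>i<n. rho i + (lam + s) * gam i + t * q i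
               = (\<Sum>j<n. c i j * (rho j + (s - lam) * gam j - t * q j))"
  shows "(\<Sum>i<n. q i) = 0 \<and> (\<Sum>i<n. gam i) = 0 \<and>
    ((\<forall>i<n. \<forall>j<n. c i j = (if i = j then 0 else 1 / (real n - 1))) \<longrightarrow>
      (let m = (real n - 2) / real n in
        \<forall>i<n. \<forall>j<n.
          m * q i - gam i + k * rho i = m * q j - gam j + k * rho j \<and>
          rho i + (m + sqrt (2 * pi) / (pi - 2)) * lam * gam i + t * m * q i
            = rho j + (m + sqrt (2 * pi) / (pi - 2)) * lam * gam j + t * m * q j \<and>
          rho i + m / a * ((4 + m * sqrt (2 * pi)) / (sqrt (2 * pi) + 2 * m)) * q i
            = rho j + m / a * ((4 + m * sqrt (2 * pi)) / (sqrt (2 * pi) + 2 * m)) * q j))"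
proof -
  have "lam \<noteq> 0"
    using a_pos pi_gt3 pi_less_4 by (simp add: lam_def)
  then have totals: "(\<Sum>i<n. q i) = 0 \<and> (\<Sum>i<n. gam i) = 0"
    using coupled_totals_vanish[OF colsum _ eq1 eq2] by blast
  note invariants = uniform_node_invariants[OF a_pos n_ge lam_def s_def k_def t_def _
      totals[THEN conjunct1] totals[THEN conjunct2] eq1 eq2]
  show ?thesis
    using totals invariants unfolding Let_def by simp
qed

end
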